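(* Let $d\geq 2$ and $U=(u_{ij})_{i,j=1}^d\in\mathcal{U}_d(\mathbb{C})$. If there exist $l\in\{1,\dots,d\}$ and $D_1,D_2\in\mathcal{DU}_d(\mathbb{C})$ such that $D_2U^\dagger D_1U|l\rangle$ is a maximally mutually coherent state (i.e., the coherence engine produces a maximally mutually coherent state with just three strokes), then $$\exists\,l\in\{1,\dots,d\}\ \forall\,m\in\{1,\dots,d\}:\quad \max_i|\bar{u}_{im}u_{il}|\leq\frac12\left(\sum_{j=1}^d|\bar{u}_{jm}u_{jl}|+\frac{1}{\sqrt d}\right),$$ equivalently, $$\max_l\min_m\left(\sum_{j=1}^d\frac{|\bar{u}_{jm}u_{jl}|}{2}-\max_i|\bar{u}_{im}u_{il}|\right)\geq-\frac{1}{2\sqrt d}.$$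
   Context: $\mathcal{U}_d(\mathbb{C})$ denotes the group of $d\times d$ unitary matrices and $\mathcal{DU}_d(\mathbb{C})$ its subgroup of diagonal unitary matrices; $\{|j\rangle\}$ is the computational basis (Alice's basis), and Bob's basis is $\{U^\dagger|j\rangle\}$. Alice's free operations are $\mathcal{DU}_d(\mathbb{C})$ and Bob's are $\{U^\dagger DU: D\in\mathcal{DU}_d(\mathbb{C})\}$. A three-stroke protocol: Alice prepares a basis state $|l\rangle$, Bob applies some $U^\dagger D_1U$, Alice applies some $D_2$. A pure state $|\psi\rangle$ is maximally mutually coherent if $|\langle j|\psi\rangle|=|\langle j|U|\psi\rangle|=1/\sqrt d$ for all $j$. *)

theory Defs
  imports "HOL-Analysis.Analysis"
begin

definition dagger :: "complex ^'n ^'m \<Rightarrow> complex ^'m ^'n" where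
  "dagger A = (\<chi> i j. cnj (A $ j $ i))"

definition unitary :: "complex ^'n ^'n \<Rightarrow> bool" where
  "unitary U \<longleftrightarrow> U ** dagger U = mat 1 \<and> dagger U ** U = mat 1"

definition diag_unitary :: "complex ^'n ^'n \<Rightarrow> bool" where
  "diag_unitary D \<longleftrightarrow> (\<forall>i j. i \<noteq> j \<longrightarrow> D $ i $ j = 0) \<and> (\<forall>i. norm (D $ i $ i) = 1)"

definition ket :: "'n \<Rightarrow> complex ^'n" where
  "ket l = axis l 1"

text \<open>Maximally mutually coherent pure state w.r.t. Alice's basis {|j>} and Bob's basis {U^dagger |j>}.\<close>
definition max_mut_coherent :: "complex ^'n ^'n \<Rightarrow> complex ^'n \<Rightarrow> bool" where
  "max_mut_coherent U psi \<longleftrightarrow>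
     (\<forall>j. norm (psi $ j) = 1 / sqrt (real CARD('n))) \<and>
     (\<forall>j. norm ((U *v psi) $ j) = 1 / sqrt (real CARD('n)))"

end

theory Submission
  imports Defs
begin

text \<open>Write \<open>a\<^sub>k = cnj (u\<^sub>k\<^sub>m) u\<^sub>k\<^sub>l\<close> and let \<open>e\<^sub>k\<close> be the diagonal of \<open>D\<^sub>1\<close>.
  Up to the phase \<open>D\<^sub>2 $ m $ m\<close>, the \<open>m\<close>-th amplitude of \<open>D\<^sub>2 U\<^sup>\<dagger> D\<^sub>1 U |l\<rangle>\<close> is
  \<open>\<Sum>\<^sub>k a\<^sub>k e\<^sub>k\<close>, so maximal coherence in Alice's basis gives \<open>|\<Sum>\<^sub>k a\<^sub>k e\<^sub>k| = 1/\<surd>d\<close>.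
  Splitting off the term \<open>a\<^sub>i e\<^sub>i\<close> and applying the triangle inequality to the rest
  yields \<open>2|a\<^sub>i| \<le> \<Sum>\<^sub>k |a\<^sub>k| + 1/\<surd>d\<close> for every \<open>i\<close>, with the prepared \<open>l\<close> as witness.\<close>

lemma diag_unitary_matrix_vector_mult:
  assumes "diag_unitary D"
  shows "(D *v x) $ i = D $ i $ i * x $ i"
proof -
  have "(D *v x) $ i = (\<Sum>j\<in>UNIV. D $ i $ j * x $ j)"
    by (simp add: matrix_vector_mult_def)
  also have "\<dots> = (\<Sum>j\<in>{i}. D $ i $ j * x $ j)"
    by (rule sum.mono_neutral_right) (use assms in \<open>auto simp: diag_unitary_def\<close>)
  finally show ?thesis by simp
qed

lemma dagger_matrix_vector_mult:
  "(dagger U *v y) $ i = (\<Sum>k\<in>UNIV. cnj (U $ k $ i) * y $ k)"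
  by (simp add: matrix_vector_mult_def dagger_def)

lemma matrix_vector_mult_ket: "(U *v ket l) $ k = U $ k $ l"
  by (simp add: matrix_vector_mult_def ket_def axis_def if_distrib cong: if_cong)

lemma three_stroke_amplitude:
  assumes "diag_unitary D1" and "diag_unitary D2"
  shows "((D2 ** dagger U ** D1 ** U) *v ket l) $ m
           = D2 $ m $ m * (\<Sum>k\<in>UNIV. cnj (U $ k $ m) * U $ k $ l * D1 $ k $ k)"
proof -
  have "(D2 ** dagger U ** D1 ** U) *v ket l = D2 *v (dagger U *v (D1 *v (U *v ket l)))"
    by (simp add: matrix_vector_mul_assoc matrix_mul_assoc)
  then show ?thesis
    using assms by (simp add: diag_unitary_matrix_vector_mult dagger_matrix_vector_mult
        matrix_vector_mult_ket mult_ac)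
qed

lemma norm_le_half_sum_norm_plus_norm_phased_sum:
  fixes a e :: "'i \<Rightarrow> 'a::real_normed_div_algebra"
  assumes "finite S" and "i \<in> S" and "\<And>k. k \<in> S \<Longrightarrow> norm (e k) = 1"
  shows "2 * norm (a i) \<le> (\<Sum>k\<in>S. norm (a k)) + norm (\<Sum>k\<in>S. a k * e k)"
proof -
  let ?R = "S - {i}"
  have split: "(\<Sum>k\<in>S. a k * e k) = a i * e i + (\<Sum>k\<in>?R. a k * e k)"
    and split_norm: "(\<Sum>k\<in>S. norm (a k)) = norm (a i) + (\<Sum>k\<in>?R. norm (a k))"
    using assms(1,2) by (simp_all add: sum.remove)
  have "norm (a i) = norm (a i * e i)"
    using assms(2,3) by (simp add: norm_mult)
  also have "a i * e i = (\<Sum>k\<in>S. a k * e k) - (\<Sum>k\<in>?R. a k * e k)"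
    using split by simp
  also have "norm \<dots> \<le> norm (\<Sum>k\<in>S. a k * e k) + norm (\<Sum>k\<in>?R. a k * e k)"
    by (rule norm_triangle_ineq4)
  also have "norm (\<Sum>k\<in>?R. a k * e k) \<le> (\<Sum>k\<in>?R. norm (a k * e k))"
    by (rule norm_sum)
  also have "(\<Sum>k\<in>?R. norm (a k * e k)) = (\<Sum>k\<in>?R. norm (a k))"
    using assms(3) by (simp add: norm_mult)
  finally show ?thesis
    using split_norm by linarith
qed

theorem proposition14:
  fixes U :: "complex ^'n ^'n"
  assumes "CARD('n) \<ge> 2"
    and "unitary U"
    and "\<exists>l D1 D2. diag_unitary D1 \<and> diag_unitary D2 \<and>
           max_mut_coherent U ((D2 ** dagger U ** D1 ** U) *v ket l)"
  shows "\<exists>l. \<forall>m. (MAX i. norm (cnj (U $ i $ m) * U $ i $ l))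
           \<le> (1/2) * ((\<Sum>j\<in>UNIV. norm (cnj (U $ j $ m) * U $ j $ l)) + 1 / sqrt (real CARD('n)))"
proof -
  obtain l D1 D2 where D1: "diag_unitary D1" and D2: "diag_unitary D2"
    and coherent: "max_mut_coherent U ((D2 ** dagger U ** D1 ** U) *v ket l)"
    using assms(3) by blast
  have "norm (cnj (U $ i $ m) * U $ i $ l)
          \<le> (1/2) * ((\<Sum>j\<in>UNIV. norm (cnj (U $ j $ m) * U $ j $ l)) + 1 / sqrt (real CARD('n)))"
    for i m
  proof -
    have "norm (D2 $ m $ m) = 1"
      using D2 by (simp add: diag_unitary_def)
    moreover have "norm (((D2 ** dagger U ** D1 ** U) *v ket l) $ m) = 1 / sqrt (real CARD('n))"
      using coherent by (simp add: max_mut_coherent_def)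
    ultimately have "norm (\<Sum>k\<in>UNIV. cnj (U $ k $ m) * U $ k $ l * D1 $ k $ k) = 1 / sqrt (real CARD('n))"
      by (simp add: three_stroke_amplitude[OF D1 D2] norm_mult)
    then show ?thesis
      using norm_le_half_sum_norm_plus_norm_phased_sum[of UNIV i "\<lambda>k. D1 $ k $ k"
          "\<lambda>k. cnj (U $ k $ m) * U $ k $ l"] D1
      by (simp add: diag_unitary_def)
  qed
  then show ?thesis
    by (intro exI[of _ l] allI Max.boundedI) auto
qed

end
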